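(* Let $-\infty\le a<b\le\infty$, let $f,g$ be differentiable on $(a,b)$ with $g'\ne0$ on $(a,b)$, and suppose there is $c\in(a,b)$ such that either (I) $f'/g'$ is strictly increasing on $(a,c)$ and strictly decreasing on $(c,b)$, or (II) $f'/g'$ is strictly decreasing on $(a,c)$ and strictly increasing on $(c,b)$. (i) Suppose $\lim_{x\to a^+}f(x)=\lim_{x\to a^+}g(x)=0$ and $\lim_{x\to a^+}f(x)/g(x)=\lambda\in\mathbb R$. In case (I), $f(x)/g(x)>\lambda$ for all $x\in(a,b)$ if and only if $\lim_{x\to b^-}f(x)/g(x)\ge\lambda$; in case (II), $f(x)/g(x)<\lambda$ for all $x\in(a,b)$ if and only if $\lim_{x\to b^-}f(x)/g(x)\le\lambda$. (ii) Suppose $\lim_{x\to b^-}f(x)=\lim_{x\to b^-}g(x)=0$ and $\lim_{x\to b^-}f(x)/g(x)=\lambda\in\mathbb R$. In case (I), $f(x)/g(x)>\lambda$ for all $x\in(a,b)$ if and only if $\lim_{x\to a^+}f(x)/g(x)\ge\lambda$; in case (II), $f(x)/g(x)<\lambda$ for all $x\in(a,b)$ if and only if $\lim_{x\to a^+}f(x)/g(x)\le\lambda$. (The relevant one-sided limits of $f/g$ exist in $[-\infty,\infty]$ under these hypotheses.) *)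

theory Defs
  imports "HOL-Analysis.Analysis"
begin

definition eint :: "ereal \<Rightarrow> ereal \<Rightarrow> real set" where
  "eint a b = {x::real. a < ereal x \<and> ereal x < b}"

definition at_right_ereal :: "ereal \<Rightarrow> real filter" where
  "at_right_ereal a = (if a = -\<infinity> then at_bot else at_right (real_of_ereal a))"

definition at_left_ereal :: "ereal \<Rightarrow> real filter" where
  "at_left_ereal b = (if b = \<infinity> then at_top else at_left (real_of_ereal b))"

definition strictly_incr_on :: "real set \<Rightarrow> (real \<Rightarrow> real) \<Rightarrow> bool" where
  "strictly_incr_on S h \<longleftrightarrow> (\<forall>x\<in>S. \<forall>y\<in>S. x < y \<longrightarrow> h x < h y)"

definition strictly_decr_on :: "real set \<Rightarrow> (real \<Rightarrow> real) \<Rightarrow> bool" where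
  "strictly_decr_on S h \<longleftrightarrow> (\<forall>x\<in>S. \<forall>y\<in>S. x < y \<longrightarrow> h x > h y)"

end

theory Submission
  imports Defs
begin

text \<open>
  Write \<open>r = f/g\<close> and
  \<open>h = f'/g'\<close>.  The Cauchy mean value theorem gives, for \<open>z < x\<close>, some \<open>\<xi> \<in> (z, x)\<close> with
  \<open>r x = (g z / g x) r z + (1 - g z / g x) h \<xi>\<close>; since \<open>g\<close> is strictly monotone and vanishes
  at \<open>a\<close>, the weight \<open>g z / g x\<close> lies in \<open>(0, 1)\<close>, so \<open>r x\<close> lies strictly between \<open>r z\<close>
  and \<open>h \<xi>\<close>.  In case (I) this yields: \<open>r \<le> h\<close> and \<open>r\<close> strictly increases on \<open>(a, c]\<close>, so
  \<open>r > \<lambda>\<close> there; on \<open>(c, b)\<close>, \<open>r\<close> increases while below \<open>h\<close>, and once it reaches \<open>h\<close>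
  it decreases and stays above \<open>h\<close>.  Hence \<open>r\<close> is eventually monotone near \<open>b\<close>, has a limit
  \<open>L\<close> there, and \<open>r > \<lambda>\<close> on \<open>(a, b)\<close> iff \<open>L \<ge> \<lambda>\<close>.
\<close>

lemma eint_iff: "x \<in> eint a b \<longleftrightarrow> a < ereal x \<and> ereal x < b"
  by (simp add: eint_def)

lemma ereal_lower_bound_mono: "a < ereal y \<Longrightarrow> y \<le> x \<Longrightarrow> a < ereal x"
  using less_le_trans[of a "ereal y" "ereal x"] by simp

lemma ereal_upper_bound_mono: "ereal y < b \<Longrightarrow> x \<le> y \<Longrightarrow> ereal x < b"
  using le_less_trans[of "ereal x" "ereal y" b] by simp

lemma eint_between:
  assumes "z \<in> eint a b" "x \<in> eint a b" "z \<le> t" "t \<le> x"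
  shows "t \<in> eint a b"
  using assms ereal_lower_bound_mono ereal_upper_bound_mono by (meson eint_iff)

lemma is_interval_eint: "is_interval (eint a b)"
  unfolding is_interval_1 using eint_between by blast

lemma eint_left_part:
  assumes "c \<in> eint a b"
  shows "x \<in> eint a (ereal c) \<longleftrightarrow> x \<in> eint a b \<and> x < c"
  using assms ereal_upper_bound_mono[of c b x] by (auto simp: eint_iff)

lemma eint_right_part:
  assumes "c \<in> eint a b"
  shows "x \<in> eint (ereal c) b \<longleftrightarrow> x \<in> eint a b \<and> c < x"
  using assms ereal_lower_bound_mono[of a c x] by (auto simp: eint_iff)

lemma eint_uminus: "x \<in> eint (- b) (- a) \<longleftrightarrow> - x \<in> eint a b"
  by (cases a; cases b) (auto simp: eint_iff)

lemma at_right_ereal_nontrivial: "a \<noteq> \<infinity> \<Longrightarrow> at_right_ereal a \<noteq> bot"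
  by (auto simp: at_right_ereal_def)

lemma at_left_ereal_nontrivial: "b \<noteq> -\<infinity> \<Longrightarrow> at_left_ereal b \<noteq> bot"
  by (auto simp: at_left_ereal_def)

lemma at_right_ereal_uminus:
  "b \<noteq> -\<infinity> \<Longrightarrow> at_right_ereal (- b) = filtermap uminus (at_left_ereal b)"
  by (cases b) (auto simp: at_right_ereal_def at_left_ereal_def at_bot_mirror at_right_minus)

lemma at_left_ereal_uminus:
  "a \<noteq> \<infinity> \<Longrightarrow> at_left_ereal (- a) = filtermap uminus (at_right_ereal a)"
  by (cases a) (auto simp: at_right_ereal_def at_left_ereal_def at_top_mirror at_left_minus)

lemma eventually_at_right_ereal:
  assumes "a < ereal z"
  shows "eventually (\<lambda>y. a < ereal y \<and> y < z) (at_right_ereal a)"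
proof (cases a)
  case (real r)
  then have "r < z" using assms by simp
  from eventually_at_right_real[OF this] show ?thesis
    unfolding at_right_ereal_def real by (auto elim!: eventually_mono)
qed (use assms in \<open>auto simp: at_right_ereal_def eventually_at_bot_dense intro!: exI[of _ z]\<close>)

lemma eventually_at_left_ereal:
  assumes "ereal z < b"
  shows "eventually (\<lambda>y. z < y \<and> ereal y < b) (at_left_ereal b)"
proof (cases b)
  case (real r)
  then have "z < r" using assms by simp
  from eventually_at_left_real[OF this] show ?thesis
    unfolding at_left_ereal_def real by (auto elim!: eventually_mono)
qed (use assms in \<open>auto simp: at_left_ereal_def eventually_at_top_dense intro!: exI[of _ z]\<close>)

lemma eventually_eint_below:
  assumes "x \<in> eint a b"
  shows "eventually (\<lambda>y. y \<in> eint a b \<and> y < x) (at_right_ereal a)"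
  using eventually_at_right_ereal[of a x] assms
  by (auto simp: eint_iff elim!: eventually_mono intro: ereal_upper_bound_mono[of x b])

lemma eventually_eint_above:
  assumes "x \<in> eint a b"
  shows "eventually (\<lambda>y. y \<in> eint a b \<and> x < y) (at_left_ereal b)"
  using eventually_at_left_ereal[of x b] assms
  by (auto simp: eint_iff elim!: eventually_mono intro: ereal_lower_bound_mono[of a x])

lemma eint_exists_below:
  assumes "x \<in> eint a b"
  obtains z where "z \<in> eint a b" "z < x"
proof -
  have "a \<noteq> \<infinity>" using assms by (auto simp: eint_iff)
  from eventually_happens'[OF at_right_ereal_nontrivial[OF this] eventually_eint_below[OF assms]]
  show ?thesis using that by blast
qed

lemma eint_exists_above:
  assumes "x \<in> eint a b"
  obtains z where "z \<in> eint a b" "x < z"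
proof -
  have "b \<noteq> -\<infinity>" using assms by (auto simp: eint_iff)
  from eventually_happens'[OF at_left_ereal_nontrivial[OF this] eventually_eint_above[OF assms]]
  show ?thesis using that by blast
qed

lemma mono_tendsto_at_left_ereal:
  assumes zb: "ereal z < b" and mono: "mono_on (eint (ereal z) b) u"
  shows "\<exists>L. ((\<lambda>x. ereal (u x)) \<longlongrightarrow> L) (at_left_ereal b)"
proof -
  let ?S = "eint (ereal z) b"
  have near_b: "eventually (\<lambda>y. y \<in> ?S) (at_left_ereal b)"
    using eventually_at_left_ereal[OF zb] by (auto simp: eint_iff elim!: eventually_mono)
  have "((\<lambda>x. ereal (u x)) \<longlongrightarrow> (SUP y\<in>?S. ereal (u y))) (at_left_ereal b)"
  proof (rule increasing_tendsto)
    show "eventually (\<lambda>y. ereal (u y) \<le> (SUP y\<in>?S. ereal (u y))) (at_left_ereal b)"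
      using near_b by eventually_elim (rule SUP_upper)
    fix l assume "l < (SUP y\<in>?S. ereal (u y))"
    then obtain y where y: "y \<in> ?S" "l < ereal (u y)" unfolding less_SUP_iff by blast
    show "eventually (\<lambda>x. l < ereal (u x)) (at_left_ereal b)"
      using eventually_eint_above[OF y(1)]
    proof eventually_elim
      case (elim x)
      then have "u y \<le> u x" using mono y(1) by (auto dest: mono_onD)
      then show ?case using y(2) by (meson ereal_less_eq(3) less_le_trans)
    qed
  qed
  then show ?thesis by blast
qed

lemma antimono_tendsto_at_left_ereal:
  assumes zb: "ereal z < b" and antimono: "antimono_on (eint (ereal z) b) u"
  shows "\<exists>L. ((\<lambda>x. ereal (u x)) \<longlongrightarrow> L) (at_left_ereal b)"
proof -
  have "mono_on (eint (ereal z) b) (\<lambda>x. - u x)"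
    using antimono by (auto simp: monotone_on_def)
  then obtain L where "((\<lambda>x. ereal (- u x)) \<longlongrightarrow> L) (at_left_ereal b)"
    using mono_tendsto_at_left_ereal[OF zb] by blast
  from tendsto_uminus_ereal[OF this] show ?thesis by auto
qed

text \<open>The conclusion of the Cauchy mean value theorem on \<open>I\<close>, with \<open>h\<close> in place of \<open>f'/g'\<close>.
  The argument only uses this property, which makes the symmetries easy to transport.\<close>
definition cauchy_mean_value_on ::
    "real set \<Rightarrow> (real \<Rightarrow> real) \<Rightarrow> (real \<Rightarrow> real) \<Rightarrow> (real \<Rightarrow> real) \<Rightarrow> bool" where
  "cauchy_mean_value_on I f g h \<longleftrightarrow>
     (\<forall>z\<in>I. \<forall>x\<in>I. z < x \<longrightarrow> (\<exists>\<xi>. z < \<xi> \<and> \<xi> < x \<and> f x - f z = h \<xi> * (g x - g z)))"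

lemma cauchy_mean_value_onD:
  assumes "cauchy_mean_value_on I f g h" "z \<in> I" "x \<in> I" "z < x"
  obtains \<xi> where "z < \<xi>" "\<xi> < x" "f x - f z = h \<xi> * (g x - g z)"
  using assms unfolding cauchy_mean_value_on_def by blast

lemma cauchy_mean_value_on_deriv:
  assumes I: "is_interval (I :: real set)"
    and f: "\<forall>x\<in>I. f differentiable (at x)" and g: "\<forall>x\<in>I. g differentiable (at x)"
    and g'_nz: "\<forall>x\<in>I. deriv g x \<noteq> 0"
  shows "cauchy_mean_value_on I f g (\<lambda>x. deriv f x / deriv g x)"
  unfolding cauchy_mean_value_on_def
proof (intro ballI impI)
  fix z x assume zx: "z \<in> I" "x \<in> I" "z < x"
  have between: "t \<in> I" if "z \<le> t" "t \<le> x" for t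
    using I zx that unfolding is_interval_1 by blast
  have "\<exists>\<xi>. z < \<xi> \<and> \<xi> < x \<and> (f x - f z) * deriv g \<xi> = (g x - g z) * deriv f \<xi>"
  proof (rule GMVT'[OF zx(3)])
    fix t assume "z \<le> t" "t \<le> x"
    then show "isCont f t" "isCont g t"
      using between f g differentiable_imp_continuous_within by blast+
  next
    fix t assume "z < t" "t < x"
    then show "(f has_real_derivative deriv f t) (at t)" "(g has_real_derivative deriv g t) (at t)"
      using between f g DERIV_deriv_iff_real_differentiable by (meson less_imp_le)+
  qed
  then obtain \<xi> where \<xi>: "z < \<xi>" "\<xi> < x" "(f x - f z) * deriv g \<xi> = (g x - g z) * deriv f \<xi>"
    by blast
  have "deriv g \<xi> \<noteq> 0" using g'_nz between \<xi> by (meson less_imp_le)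
  with \<xi> show "\<exists>\<xi>. z < \<xi> \<and> \<xi> < x \<and> f x - f z = deriv f \<xi> / deriv g \<xi> * (g x - g z)"
    by (auto simp: field_simps)
qed

text \<open>A function on an interval with nowhere vanishing derivative is injective (Rolle), hence,
  being continuous, strictly monotone.\<close>
lemma strict_mono_on_nonzero_deriv:
  assumes I: "is_interval (I :: real set)"
    and g: "\<forall>x\<in>I. g differentiable (at x)" and g'_nz: "\<forall>x\<in>I. deriv g x \<noteq> 0"
  shows "strict_mono_on I g \<or> strict_antimono_on I g"
proof -
  have "g z \<noteq> g x" if zx: "z \<in> I" "x \<in> I" "z < x" for z x
  proof
    assume eq: "g z = g x"
    have between: "t \<in> I" if "z \<le> t" "t \<le> x" for t
      using I zx that unfolding is_interval_1 by blast
    have "\<exists>\<xi>. z < \<xi> \<and> \<xi> < x \<and> g x - g z = (x - z) * deriv g \<xi>"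
      by (rule MVT2[OF zx(3)])
         (use between g DERIV_deriv_iff_real_differentiable in blast)
    then obtain \<xi> where "z < \<xi>" "\<xi> < x" "g x - g z = (x - z) * deriv g \<xi>" by blast
    moreover have "deriv g \<xi> \<noteq> 0" using g'_nz between \<open>z < \<xi>\<close> \<open>\<xi> < x\<close> by (meson less_imp_le)
    ultimately show False using eq zx(3) by simp
  qed
  then have "inj_on g I" by (metis inj_onI linorder_neq_iff)
  moreover have "continuous_on I g"
    using g differentiable_imp_continuous_within by (blast intro: continuous_at_imp_continuous_on)
  ultimately show ?thesis using injective_eq_monotone_map[OF I] by blast
qed

lemma strict_mono_vanishing_pos:
  fixes g :: "real \<Rightarrow> real"
  assumes mono: "strict_mono_on (eint a b) g" and g0: "(g \<longlongrightarrow> 0) (at_right_ereal a)"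
    and x: "x \<in> eint a b"
  shows "0 < g x"
proof -
  obtain w where w: "w \<in> eint a b" "w < x" using eint_exists_below[OF x] .
  have "a \<noteq> \<infinity>" using x by (auto simp: eint_iff)
  have "0 \<le> g w"
  proof (rule tendsto_upperbound[OF g0])
    show "eventually (\<lambda>y. g y \<le> g w) (at_right_ereal a)"
      using eventually_eint_below[OF w(1)] by eventually_elim (use mono w(1) in \<open>auto dest: strict_mono_onD\<close>)
  qed (rule at_right_ereal_nontrivial[OF \<open>a \<noteq> \<infinity>\<close>])
  then show ?thesis using strict_mono_onD[OF mono w(1) x w(2)] by simp
qed

lemma strict_mono_vanishing_ratio:
  fixes g :: "real \<Rightarrow> real"
  assumes mono: "strict_mono_on (eint a b) g \<or> strict_antimono_on (eint a b) g"
    and g0: "(g \<longlongrightarrow> 0) (at_right_ereal a)"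
    and zx: "z \<in> eint a b" "x \<in> eint a b" "z < x"
  shows "0 < g z / g x \<and> g z / g x < 1"
proof -
  have *: "0 < G z / G x \<and> G z / G x < 1"
    if "strict_mono_on (eint a b) G" "(G \<longlongrightarrow> 0) (at_right_ereal a)" for G :: "real \<Rightarrow> real"
    using strict_mono_vanishing_pos[OF that] strict_mono_onD[OF that(1) zx] zx by simp
  show ?thesis
  proof (cases "strict_mono_on (eint a b) g")
    case False
    then have "strict_mono_on (eint a b) (\<lambda>x. - g x)"
      using mono by (auto simp: monotone_on_def)
    moreover have "((\<lambda>x. - g x) \<longlongrightarrow> 0) (at_right_ereal a)" using tendsto_minus[OF g0] by simp
    ultimately show ?thesis using *[of "\<lambda>x. - g x"] by simp
  qed (use * g0 in blast)
qed

locale peaked_ratio =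
  fixes a b :: ereal and f g h :: "real \<Rightarrow> real" and c :: real
  assumes c_mem: "c \<in> eint a b"
    and mean_value: "cauchy_mean_value_on (eint a b) f g h"
    and g_strict_mono: "strict_mono_on (eint a b) g \<or> strict_antimono_on (eint a b) g"
    and h_incr: "strictly_incr_on (eint a (ereal c)) h"
    and h_decr: "strictly_decr_on (eint (ereal c) b) h"
    and f_vanishes: "(f \<longlongrightarrow> 0) (at_right_ereal a)"
    and g_vanishes: "(g \<longlongrightarrow> 0) (at_right_ereal a)"
begin

definition ratio :: "real \<Rightarrow> real" where
  "ratio x = f x / g x"

lemma filters_nontrivial: "at_right_ereal a \<noteq> bot" "at_left_ereal b \<noteq> bot"
  using c_mem by (auto simp: eint_iff intro!: at_right_ereal_nontrivial at_left_ereal_nontrivial)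

lemma h_increasing: "x \<in> eint a b \<Longrightarrow> y \<in> eint a b \<Longrightarrow> x < y \<Longrightarrow> y < c \<Longrightarrow> h x < h y"
  using h_incr eint_left_part[OF c_mem] by (auto simp: strictly_incr_on_def)

lemma h_decreasing: "x \<in> eint a b \<Longrightarrow> y \<in> eint a b \<Longrightarrow> c < x \<Longrightarrow> x < y \<Longrightarrow> h y < h x"
  using h_decr eint_right_part[OF c_mem] by (auto simp: strictly_decr_on_def)

lemma g_ratio: "z \<in> eint a b \<Longrightarrow> x \<in> eint a b \<Longrightarrow> z < x \<Longrightarrow> 0 < g z / g x \<and> g z / g x < 1"
  using strict_mono_vanishing_ratio[OF g_strict_mono g_vanishes] .

lemma g_nonzero: "x \<in> eint a b \<Longrightarrow> g x \<noteq> 0"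
  by (metis eint_exists_below g_ratio div_by_0 less_irrefl)

lemma ratio_mixing:
  assumes zx: "z \<in> eint a b" "x \<in> eint a b" "z < x"
  obtains \<xi> t where "z < \<xi>" "\<xi> < x" "0 < t" "t < 1"
    "ratio x - ratio z = t * (h \<xi> - ratio z)" "ratio x - h \<xi> = (1 - t) * (ratio z - h \<xi>)"
proof -
  obtain \<xi> where \<xi>: "z < \<xi>" "\<xi> < x" "f x - f z = h \<xi> * (g x - g z)"
    using cauchy_mean_value_onD[OF mean_value zx] .
  have gx: "g x \<noteq> 0" using g_nonzero[OF zx(2)] .
  have "ratio x = (g z / g x) * ratio z + (1 - g z / g x) * h \<xi>"
    using \<xi>(3) gx g_nonzero[OF zx(1)] by (simp add: ratio_def field_simps)
  then show ?thesis
    using that[of \<xi> "1 - g z / g x"] \<xi> g_ratio[OF zx] by (simp add: algebra_simps)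
qed

text \<open>On the increasing branch the ratio stays below \<open>h\<close>: letting \<open>z \<rightarrow> a\<close> in the mean value
  identity on \<open>[z, x]\<close>, where \<open>h \<xi> < h x\<close>.\<close>
lemma ratio_le_h_left:
  assumes x: "x \<in> eint a b" "x < c"
  shows "ratio x \<le> h x"
proof -
  have gx: "g x \<noteq> 0" using g_nonzero[OF x(1)] .
  let ?D = "\<lambda>y. ((f x - f y) - h x * (g x - g y)) / g x"
  have "(?D \<longlongrightarrow> ((f x - 0) - h x * (g x - 0)) / g x) (at_right_ereal a)"
    by (intro tendsto_intros f_vanishes g_vanishes gx)
  moreover have "eventually (\<lambda>y. ?D y \<le> 0) (at_right_ereal a)"
    using eventually_eint_below[OF x(1)]
  proof eventually_elim
    case (elim y)
    then obtain \<xi> where \<xi>: "y < \<xi>" "\<xi> < x" "f x - f y = h \<xi> * (g x - g y)"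
      using cauchy_mean_value_onD[OF mean_value _ x(1)] by blast
    have "\<xi> \<in> eint a b" using eint_between[of y a b x \<xi>] elim x \<xi> by simp
    then have "h \<xi> < h x" using h_increasing \<xi>(2) x by blast
    moreover have "0 < 1 - g y / g x" using g_ratio[OF _ x(1)] elim by auto
    moreover have "?D y = (h \<xi> - h x) * (1 - g y / g x)"
      using \<xi>(3) gx by (simp add: field_simps)
    ultimately show ?case by (simp add: mult_neg_pos less_imp_le)
  qed
  ultimately have "((f x - 0) - h x * (g x - 0)) / g x \<le> 0"
    using tendsto_upperbound filters_nontrivial(1) by blast
  then show ?thesis using gx by (simp add: ratio_def diff_divide_distrib)
qed

lemma ratio_increasing_left:
  assumes zx: "z \<in> eint a b" "x \<in> eint a b" "z < x" and "x \<le> c"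
  shows "ratio z < ratio x"
proof -
  obtain \<xi> t where m: "z < \<xi>" "\<xi> < x" "0 < t" "ratio x - ratio z = t * (h \<xi> - ratio z)"
    using ratio_mixing[OF zx] by metis
  have "\<xi> \<in> eint a b" using eint_between[OF zx(1,2)] m by simp
  then have "h z < h \<xi>" using h_increasing zx m assms(4) by simp
  moreover have "ratio z \<le> h z" using ratio_le_h_left zx assms(4) by simp
  ultimately have "0 < t * (h \<xi> - ratio z)" using m(3) by simp
  with m(4) show ?thesis by linarith
qed

lemma ratio_above_limit_left:
  assumes lim: "(ratio \<longlongrightarrow> lam) (at_right_ereal a)" and x: "x \<in> eint a b" "x \<le> c"
  shows "lam < ratio x"
proof -
  obtain z where z: "z \<in> eint a b" "z < x" using eint_exists_below[OF x(1)] .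
  have "lam \<le> ratio z"
  proof (rule tendsto_upperbound[OF lim _ filters_nontrivial(1)])
    show "eventually (\<lambda>y. ratio y \<le> ratio z) (at_right_ereal a)"
      using eventually_eint_below[OF z(1)]
      by eventually_elim (use ratio_increasing_left z x in \<open>auto intro: less_imp_le\<close>)
  qed
  also have "\<dots> < ratio x" using ratio_increasing_left z x by simp
  finally show ?thesis .
qed

lemma ratio_after_crossing:
  assumes z: "z \<in> eint a b" "c < z" "h z \<le> ratio z" and x: "x \<in> eint a b" "z < x"
  shows "ratio x < ratio z \<and> h x < ratio x"
proof -
  obtain \<xi> t where m: "z < \<xi>" "\<xi> < x" "0 < t" "t < 1"
      "ratio x - ratio z = t * (h \<xi> - ratio z)" "ratio x - h \<xi> = (1 - t) * (ratio z - h \<xi>)"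
    using ratio_mixing[OF z(1) x] .
  have \<xi>: "\<xi> \<in> eint a b" using eint_between[OF z(1) x(1)] m by simp
  have "h \<xi> < h z" using h_decreasing[OF z(1) \<xi>] z m by simp
  then have "ratio x - ratio z < 0" "ratio x - h \<xi> > 0"
    unfolding m(5,6) using m(3,4) z(3) by (simp_all add: mult_pos_neg)
  moreover have "h x < h \<xi>" using h_decreasing[OF \<xi> x(1)] z m by simp
  ultimately show ?thesis by linarith
qed

lemma ratio_increasing_below_h:
  assumes y: "y \<in> eint a b" "c \<le> y" and x: "x \<in> eint a b" "y < x" "ratio x < h x"
  shows "ratio y < ratio x"
proof -
  obtain \<xi> t where m: "y < \<xi>" "\<xi> < x" "0 < t" "t < 1"
      "ratio x - ratio y = t * (h \<xi> - ratio y)" "ratio x - h \<xi> = (1 - t) * (ratio y - h \<xi>)"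
    using ratio_mixing[OF y(1) x(1,2)] .
  have \<xi>: "\<xi> \<in> eint a b" using eint_between[OF y(1) x(1)] m by simp
  have "h x < h \<xi>" using h_decreasing[OF \<xi> x(1)] y m by simp
  then have "(1 - t) * (ratio y - h \<xi>) < 0" using m(6) x(3) by linarith
  then have "ratio y < h \<xi>" using m(4) by (simp add: mult_less_0_iff)
  then have "0 < t * (h \<xi> - ratio y)" using m(3) by simp
  with m(5) show ?thesis by linarith
qed

text \<open>The ratio is eventually monotone near \<open>b\<close>, so it has a limit there in the extended reals:
  decreasing if it ever reaches \<open>h\<close> beyond \<open>c\<close>, increasing otherwise.\<close>
lemma ratio_limit_at_b: "\<exists>L. ((\<lambda>x. ereal (ratio x)) \<longlongrightarrow> L) (at_left_ereal b)"
proof (cases "\<exists>z\<in>eint a b. c < z \<and> h z \<le> ratio z")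
  case True
  then obtain z where z: "z \<in> eint a b" "c < z" "h z \<le> ratio z" by blast
  show ?thesis
  proof (rule antimono_tendsto_at_left_ereal[of z, rotated], rule monotone_onI)
    fix x y assume "x \<in> eint (ereal z) b" "y \<in> eint (ereal z) b" "x \<le> y"
    then have xy: "x \<in> eint a b" "y \<in> eint a b" "z < x" "x \<le> y"
      using eint_right_part[OF z(1)] by auto
    then have "h x < ratio x" using ratio_after_crossing[OF z] by blast
    then show "ratio y \<le> ratio x"
      using ratio_after_crossing[of x y] xy z(2) by (cases "x = y") auto
  qed (use z(1) in \<open>simp add: eint_iff\<close>)
next
  case False
  show ?thesis
  proof (rule mono_tendsto_at_left_ereal[of c, rotated], rule monotone_onI)
    fix x y assume "x \<in> eint (ereal c) b" "y \<in> eint (ereal c) b" "x \<le> y"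
    then have "x \<in> eint a b" "y \<in> eint a b" "c < x" "x \<le> y"
      using eint_right_part[OF c_mem] by auto
    then show "ratio x \<le> ratio y"
      using False ratio_increasing_below_h[of x y] by (cases "x = y") force+
  qed (use c_mem in \<open>simp add: eint_iff\<close>)
qed

theorem ratio_above_limit_iff:
  assumes lim: "(ratio \<longlongrightarrow> lam) (at_right_ereal a)"
  shows "(\<forall>x\<in>eint a b. lam < ratio x) \<longleftrightarrow>
         (\<exists>L. ((\<lambda>x. ereal (ratio x)) \<longlongrightarrow> L) (at_left_ereal b) \<and> ereal lam \<le> L)"
proof
  assume above: "\<forall>x\<in>eint a b. lam < ratio x"
  obtain L where L: "((\<lambda>x. ereal (ratio x)) \<longlongrightarrow> L) (at_left_ereal b)"
    using ratio_limit_at_b by blast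
  have "ereal lam \<le> L"
  proof (rule tendsto_lowerbound[OF L _ filters_nontrivial(2)])
    show "eventually (\<lambda>y. ereal lam \<le> ereal (ratio y)) (at_left_ereal b)"
      using eventually_eint_above[OF c_mem] by eventually_elim (use above in \<open>auto intro: less_imp_le\<close>)
  qed
  with L show "\<exists>L. ((\<lambda>x. ereal (ratio x)) \<longlongrightarrow> L) (at_left_ereal b) \<and> ereal lam \<le> L" by blast
next
  assume "\<exists>L. ((\<lambda>x. ereal (ratio x)) \<longlongrightarrow> L) (at_left_ereal b) \<and> ereal lam \<le> L"
  then obtain L where L: "((\<lambda>x. ereal (ratio x)) \<longlongrightarrow> L) (at_left_ereal b)" "ereal lam \<le> L"
    by blast
  show "\<forall>x\<in>eint a b. lam < ratio x"
  proof
    fix x assume x: "x \<in> eint a b"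
    consider "x \<le> c" | "c < x" "ratio x < h x" | "c < x" "h x \<le> ratio x" by force
    then show "lam < ratio x"
    proof cases
      case 1
      then show ?thesis using ratio_above_limit_left[OF lim x] by simp
    next
      case 2
      then show ?thesis
        using ratio_increasing_below_h[OF c_mem _ x] ratio_above_limit_left[OF lim c_mem] by simp
    next
      case 3
      text \<open>Beyond a point \<open>x' > x\<close> the ratio decreases, so \<open>lam \<le> L \<le> ratio x' < ratio x\<close>.\<close>
      obtain x' where x': "x' \<in> eint a b" "x < x'" using eint_exists_above[OF x] .
      have x'_less: "ratio x' < ratio x" "h x' < ratio x'"
        using ratio_after_crossing[OF x 3(1,2) x'] by auto
      have "L \<le> ereal (ratio x')"
      proof (rule tendsto_upperbound[OF L(1) _ filters_nontrivial(2)])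
        show "eventually (\<lambda>y. ereal (ratio y) \<le> ereal (ratio x')) (at_left_ereal b)"
          using eventually_eint_above[OF x'(1)]
          by eventually_elim (use ratio_after_crossing x' x'_less 3 in \<open>force\<close>)
      qed
      with L(2) have "lam \<le> ratio x'" by (metis ereal_less_eq(3) order_trans)
      with x'_less(1) show ?thesis by simp
    qed
  qed
qed

end

lemma above_limit_at_a_iff:
  assumes "c \<in> eint a b" "cauchy_mean_value_on (eint a b) f g h"
    "strict_mono_on (eint a b) g \<or> strict_antimono_on (eint a b) g"
    "strictly_incr_on (eint a (ereal c)) h" "strictly_decr_on (eint (ereal c) b) h"
    "(f \<longlongrightarrow> 0) (at_right_ereal a)" "(g \<longlongrightarrow> 0) (at_right_ereal a)"
    and lim: "((\<lambda>x. f x / g x) \<longlongrightarrow> lam) (at_right_ereal a)"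
  shows "(\<forall>x\<in>eint a b. f x / g x > lam) \<longleftrightarrow>
         (\<exists>L. ((\<lambda>x. ereal (f x / g x)) \<longlongrightarrow> L) (at_left_ereal b) \<and> L \<ge> ereal lam)"
proof -
  interpret peaked_ratio a b f g h c by unfold_locales (use assms in auto)
  show ?thesis using ratio_above_limit_iff[of lam] lim unfolding ratio_def by simp
qed

text \<open>Replacing \<open>f\<close> by \<open>-f\<close> turns case (II) into case (I); these facts transport the
  hypotheses and the conclusion.\<close>
lemma cauchy_mean_value_on_uminus:
  "cauchy_mean_value_on I f g h \<Longrightarrow> cauchy_mean_value_on I (\<lambda>x. - f x) g (\<lambda>x. - h x)"
  unfolding cauchy_mean_value_on_def by (metis minus_diff_eq minus_diff_minus mult_minus_left)

lemma strictly_incr_on_uminus: "strictly_incr_on S (\<lambda>x. - h x) \<longleftrightarrow> strictly_decr_on S h"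
  by (auto simp: strictly_incr_on_def strictly_decr_on_def)

lemma strictly_decr_on_uminus: "strictly_decr_on S (\<lambda>x. - h x) \<longleftrightarrow> strictly_incr_on S h"
  by (auto simp: strictly_incr_on_def strictly_decr_on_def)

lemma ereal_limit_uminus_bound_iff:
  "(\<exists>L. ((\<lambda>x. ereal (- u x)) \<longlongrightarrow> L) F \<and> ereal (- lam) \<le> L) \<longleftrightarrow>
   (\<exists>L. ((\<lambda>x. ereal (u x)) \<longlongrightarrow> L) F \<and> L \<le> ereal lam)"
proof -
  have neg: "((\<lambda>x. ereal (- u x)) \<longlongrightarrow> - L) F \<longleftrightarrow> ((\<lambda>x. ereal (u x)) \<longlongrightarrow> L) F" for L
    using tendsto_uminus_ereal[of "\<lambda>x. ereal (u x)" L F]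
      tendsto_uminus_ereal[of "\<lambda>x. ereal (- u x)" "- L" F] by auto
  have "ereal (- lam) \<le> - L \<longleftrightarrow> L \<le> ereal lam" for L :: ereal
    by (metis ereal_minus_le_minus uminus_ereal.simps(1))
  then show ?thesis using neg by (metis ereal_uminus_uminus)
qed

lemma below_limit_at_a_iff:
  assumes c: "c \<in> eint a b" and mv: "cauchy_mean_value_on (eint a b) f g h"
    and mono: "strict_mono_on (eint a b) g \<or> strict_antimono_on (eint a b) g"
    and dec: "strictly_decr_on (eint a (ereal c)) h" and inc: "strictly_incr_on (eint (ereal c) b) h"
    and f0: "(f \<longlongrightarrow> 0) (at_right_ereal a)" and g0: "(g \<longlongrightarrow> 0) (at_right_ereal a)"
    and lim: "((\<lambda>x. f x / g x) \<longlongrightarrow> lam) (at_right_ereal a)"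
  shows "(\<forall>x\<in>eint a b. f x / g x < lam) \<longleftrightarrow>
         (\<exists>L. ((\<lambda>x. ereal (f x / g x)) \<longlongrightarrow> L) (at_left_ereal b) \<and> L \<le> ereal lam)"
proof -
  have "(\<forall>x\<in>eint a b. - f x / g x > - lam) \<longleftrightarrow>
        (\<exists>L. ((\<lambda>x. ereal (- f x / g x)) \<longlongrightarrow> L) (at_left_ereal b) \<and> L \<ge> ereal (- lam))"
  proof (rule above_limit_at_a_iff[OF c cauchy_mean_value_on_uminus[OF mv] mono])
    show "((\<lambda>x. - f x) \<longlongrightarrow> 0) (at_right_ereal a)" using tendsto_minus[OF f0] by simp
    show "((\<lambda>x. - f x / g x) \<longlongrightarrow> - lam) (at_right_ereal a)" using tendsto_minus[OF lim] by simp
  qed (use dec inc g0 in \<open>simp_all add: strictly_incr_on_uminus strictly_decr_on_uminus\<close>)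
  then show ?thesis using ereal_limit_uminus_bound_iff[of "\<lambda>x. f x / g x"] by simp
qed

text \<open>The reflection \<open>x \<mapsto> -x\<close> exchanges the two ends of the interval and preserves the
  shape of \<open>h\<close> (increasing, then decreasing); it turns part (ii) into part (i).\<close>
lemma cauchy_mean_value_on_reflect:
  assumes "cauchy_mean_value_on (eint a b) f g h"
  shows "cauchy_mean_value_on (eint (- b) (- a)) (\<lambda>x. f (- x)) (\<lambda>x. g (- x)) (\<lambda>x. h (- x))"
  unfolding cauchy_mean_value_on_def
proof (intro ballI impI)
  fix z x assume "z \<in> eint (- b) (- a)" "x \<in> eint (- b) (- a)" "z < x"
  then have "- x \<in> eint a b" "- z \<in> eint a b" "- x < - z" by (auto simp: eint_uminus)
  then obtain \<xi> where "- x < \<xi>" "\<xi> < - z" "f (- z) - f (- x) = h \<xi> * (g (- z) - g (- x))"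
    using cauchy_mean_value_onD[OF assms] by blast
  then show "\<exists>\<xi>. z < \<xi> \<and> \<xi> < x \<and> f (- x) - f (- z) = h (- \<xi>) * (g (- x) - g (- z))"
    by (intro exI[of _ "- \<xi>"]) (auto simp: algebra_simps)
qed

lemma strict_mono_reflect:
  "strict_mono_on (eint a b) g \<or> strict_antimono_on (eint a b) g \<Longrightarrow>
   strict_mono_on (eint (- b) (- a)) (\<lambda>x. g (- x)) \<or> strict_antimono_on (eint (- b) (- a)) (\<lambda>x. g (- x))"
  by (auto simp: monotone_on_def eint_uminus)

lemma strictly_incr_on_reflect:
  "strictly_incr_on (eint (- b) (- a)) (\<lambda>x. h (- x)) \<longleftrightarrow> strictly_decr_on (eint a b) h"
  unfolding strictly_incr_on_def strictly_decr_on_def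
proof safe
  fix x y assume H: "\<forall>x\<in>eint (- b) (- a). \<forall>y\<in>eint (- b) (- a). x < y \<longrightarrow> h (- x) < h (- y)"
    "x \<in> eint a b" "y \<in> eint a b" "x < y"
  then show "h y < h x" using H(1)[rule_format, of "- y" "- x"] by (simp add: eint_uminus)
next
  fix x y assume H: "\<forall>x\<in>eint a b. \<forall>y\<in>eint a b. x < y \<longrightarrow> h y < h x"
    "x \<in> eint (- b) (- a)" "y \<in> eint (- b) (- a)" "x < y"
  then show "h (- x) < h (- y)" using H(1)[rule_format, of "- y" "- x"] by (simp add: eint_uminus)
qed

lemma strictly_decr_on_reflect:
  "strictly_decr_on (eint (- b) (- a)) (\<lambda>x. h (- x)) \<longleftrightarrow> strictly_incr_on (eint a b) h"
  using strictly_incr_on_reflect[of "- a" "- b" "\<lambda>x. h (- x)"] by simp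

lemma above_limit_at_b_iff:
  assumes c: "c \<in> eint a b" and mv: "cauchy_mean_value_on (eint a b) f g h"
    and mono: "strict_mono_on (eint a b) g \<or> strict_antimono_on (eint a b) g"
    and inc: "strictly_incr_on (eint a (ereal c)) h" and dec: "strictly_decr_on (eint (ereal c) b) h"
    and f0: "(f \<longlongrightarrow> 0) (at_left_ereal b)" and g0: "(g \<longlongrightarrow> 0) (at_left_ereal b)"
    and lim: "((\<lambda>x. f x / g x) \<longlongrightarrow> lam) (at_left_ereal b)"
  shows "(\<forall>x\<in>eint a b. f x / g x > lam) \<longleftrightarrow>
         (\<exists>L. ((\<lambda>x. ereal (f x / g x)) \<longlongrightarrow> L) (at_right_ereal a) \<and> L \<ge> ereal lam)"
proof -
  have ends: "a \<noteq> \<infinity>" "b \<noteq> -\<infinity>" using c by (auto simp: eint_iff)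
  have "(\<forall>x\<in>eint (- b) (- a). f (- x) / g (- x) > lam) \<longleftrightarrow>
        (\<exists>L. ((\<lambda>x. ereal (f (- x) / g (- x))) \<longlongrightarrow> L) (at_left_ereal (- a)) \<and> L \<ge> ereal lam)"
  proof (rule above_limit_at_a_iff[of "- c"])
    show "- c \<in> eint (- b) (- a)" using c by (simp add: eint_uminus)
    show "strictly_incr_on (eint (- b) (ereal (- c))) (\<lambda>x. h (- x))"
      using strictly_incr_on_reflect[of b "ereal c" h] dec by simp
    show "strictly_decr_on (eint (ereal (- c)) (- a)) (\<lambda>x. h (- x))"
      using strictly_decr_on_reflect[of "ereal c" a h] inc by simp
  qed (use cauchy_mean_value_on_reflect[OF mv] strict_mono_reflect[OF mono] f0 g0 lim in
       \<open>simp_all add: at_right_ereal_uminus[OF ends(2)] filterlim_filtermap\<close>)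
  moreover have "(\<forall>x\<in>eint (- b) (- a). f (- x) / g (- x) > lam) \<longleftrightarrow> (\<forall>x\<in>eint a b. f x / g x > lam)"
    by (metis eint_uminus minus_minus)
  ultimately show ?thesis by (simp add: at_left_ereal_uminus[OF ends(1)] filterlim_filtermap)
qed

lemma below_limit_at_b_iff:
  assumes c: "c \<in> eint a b" and mv: "cauchy_mean_value_on (eint a b) f g h"
    and mono: "strict_mono_on (eint a b) g \<or> strict_antimono_on (eint a b) g"
    and dec: "strictly_decr_on (eint a (ereal c)) h" and inc: "strictly_incr_on (eint (ereal c) b) h"
    and f0: "(f \<longlongrightarrow> 0) (at_left_ereal b)" and g0: "(g \<longlongrightarrow> 0) (at_left_ereal b)"
    and lim: "((\<lambda>x. f x / g x) \<longlongrightarrow> lam) (at_left_ereal b)"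
  shows "(\<forall>x\<in>eint a b. f x / g x < lam) \<longleftrightarrow>
         (\<exists>L. ((\<lambda>x. ereal (f x / g x)) \<longlongrightarrow> L) (at_right_ereal a) \<and> L \<le> ereal lam)"
proof -
  have "(\<forall>x\<in>eint a b. - f x / g x > - lam) \<longleftrightarrow>
        (\<exists>L. ((\<lambda>x. ereal (- f x / g x)) \<longlongrightarrow> L) (at_right_ereal a) \<and> L \<ge> ereal (- lam))"
  proof (rule above_limit_at_b_iff[OF c cauchy_mean_value_on_uminus[OF mv] mono])
    show "((\<lambda>x. - f x) \<longlongrightarrow> 0) (at_left_ereal b)" using tendsto_minus[OF f0] by simp
    show "((\<lambda>x. - f x / g x) \<longlongrightarrow> - lam) (at_left_ereal b)" using tendsto_minus[OF lim] by simp
  qed (use dec inc g0 in \<open>simp_all add: strictly_incr_on_uminus strictly_decr_on_uminus\<close>)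
  then show ?thesis using ereal_limit_uminus_bound_iff[of "\<lambda>x. f x / g x"] by simp
qed

theorem mainTheorem5:
  fixes a b :: ereal and f g :: "real \<Rightarrow> real" and c lam :: real
  assumes ab: "a < b"
    and fdiff: "\<forall>x\<in>eint a b. f differentiable (at x)"
    and gdiff: "\<forall>x\<in>eint a b. g differentiable (at x)"
    and g'nz: "\<forall>x\<in>eint a b. deriv g x \<noteq> 0"
    and c: "c \<in> eint a b"
    and cases: "(strictly_incr_on (eint a (ereal c)) (\<lambda>x. deriv f x / deriv g x) \<and>
                 strictly_decr_on (eint (ereal c) b) (\<lambda>x. deriv f x / deriv g x))
              \<or> (strictly_decr_on (eint a (ereal c)) (\<lambda>x. deriv f x / deriv g x) \<and>
                 strictly_incr_on (eint (ereal c) b) (\<lambda>x. deriv f x / deriv g x))"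
  shows
    "(((f \<longlongrightarrow> 0) (at_right_ereal a) \<and> (g \<longlongrightarrow> 0) (at_right_ereal a) \<and>
      ((\<lambda>x. f x / g x) \<longlongrightarrow> lam) (at_right_ereal a)) \<longrightarrow>
       ((strictly_incr_on (eint a (ereal c)) (\<lambda>x. deriv f x / deriv g x) \<and>
         strictly_decr_on (eint (ereal c) b) (\<lambda>x. deriv f x / deriv g x)) \<longrightarrow>
          ((\<forall>x\<in>eint a b. f x / g x > lam) \<longleftrightarrow>
           (\<exists>L::ereal. ((\<lambda>x. ereal (f x / g x)) \<longlongrightarrow> L) (at_left_ereal b) \<and> L \<ge> ereal lam)))
     \<and> ((strictly_decr_on (eint a (ereal c)) (\<lambda>x. deriv f x / deriv g x) \<and>
         strictly_incr_on (eint (ereal c) b) (\<lambda>x. deriv f x / deriv g x)) \<longrightarrow>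
          ((\<forall>x\<in>eint a b. f x / g x < lam) \<longleftrightarrow>
           (\<exists>L::ereal. ((\<lambda>x. ereal (f x / g x)) \<longlongrightarrow> L) (at_left_ereal b) \<and> L \<le> ereal lam))))
   \<and> (((f \<longlongrightarrow> 0) (at_left_ereal b) \<and> (g \<longlongrightarrow> 0) (at_left_ereal b) \<and>
      ((\<lambda>x. f x / g x) \<longlongrightarrow> lam) (at_left_ereal b)) \<longrightarrow>
       ((strictly_incr_on (eint a (ereal c)) (\<lambda>x. deriv f x / deriv g x) \<and>
         strictly_decr_on (eint (ereal c) b) (\<lambda>x. deriv f x / deriv g x)) \<longrightarrow>
          ((\<forall>x\<in>eint a b. f x / g x > lam) \<longleftrightarrow>
           (\<exists>L::ereal. ((\<lambda>x. ereal (f x / g x)) \<longlongrightarrow> L) (at_right_ereal a) \<and> L \<ge> ereal lam)))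
     \<and> ((strictly_decr_on (eint a (ereal c)) (\<lambda>x. deriv f x / deriv g x) \<and>
         strictly_incr_on (eint (ereal c) b) (\<lambda>x. deriv f x / deriv g x)) \<longrightarrow>
          ((\<forall>x\<in>eint a b. f x / g x < lam) \<longleftrightarrow>
           (\<exists>L::ereal. ((\<lambda>x. ereal (f x / g x)) \<longlongrightarrow> L) (at_right_ereal a) \<and> L \<le> ereal lam))))"
proof -
  let ?h = "\<lambda>x. deriv f x / deriv g x"
  have mv: "cauchy_mean_value_on (eint a b) f g ?h"
    using cauchy_mean_value_on_deriv[OF is_interval_eint fdiff gdiff g'nz] .
  have mono: "strict_mono_on (eint a b) g \<or> strict_antimono_on (eint a b) g"
    using strict_mono_on_nonzero_deriv[OF is_interval_eint gdiff g'nz] .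
  show ?thesis
    using above_limit_at_a_iff[OF c mv mono] below_limit_at_a_iff[OF c mv mono]
      above_limit_at_b_iff[OF c mv mono] below_limit_at_b_iff[OF c mv mono]
    by blast
qed

end
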